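(* Let $\mathcal A=\{A_1,\dots,A_K\}$ be a finite partition of $\mathcal M$ into Borel sets and $Q$ a probability measure on $\mathcal G$. Then $\mathfrak R_{\mathcal A}\mathfrak S_nQ$ is absolutely continuous with respect to $\mathfrak R_{\mathcal A}Q$ with $$\frac{d\mathfrak R_{\mathcal A}\mathfrak S_nQ}{d\mathfrak R_{\mathcal A}Q}=e^{-\hat S_{Q,\mathcal A}/n},$$ where $\hat S_{Q,\mathcal A}(g):=-n\sum_{A\in\mathcal A}\Bigl(\log Q\bigl[e^{-S(X)/n}\,\big|\,X_A=g_A\bigr]-\log Q\bigl[e^{-S(X)/n}\bigr]\Bigr)$.
   Context: $\mathcal M$ is a complete separable metric space; $\mathcal G$ the finite integer-valued Borel measures on $\mathcal M$; $S:\mathcal G\to\mathbb R_+$ a Borel selective cost. For $g\in\mathcal G$ and Borel $R$, $g_R(B):=g(B\cap R)$. $X$ denotes the canonical random element of $\mathcal G$ ($X(g)=g$); $Q[\cdot\mid X_A=g_A]$ is a regular conditional distribution. Selection: $\mathfrak S_nP[F]:=\int e^{-S(g)/n}F(g)\,dP(g)/\int e^{-S(g)/n}\,dP(g)$. Annealed recombination: $\mathfrak R_{\mathcal A}Q[F]:=\int\cdots\int F(g^{(1)}_{A_1}+\cdots+g^{(K)}_{A_K})\,dQ(g^{(1)})\cdots dQ(g^{(K)})$. *)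

theory Defs
  imports "HOL-Probability.Probability"
begin

definition Gspace :: "'a::polish_space measure set" where
  "Gspace = {g. sets g = sets (borel :: 'a measure) \<and>
                 (\<forall>B\<in>sets (borel :: 'a measure). emeasure g B \<in> range (of_nat :: nat \<Rightarrow> ennreal))}"

definition Galg :: "'a::polish_space measure measure" where
  "Galg = (SUP B \<in> sets (borel :: 'a measure).
              vimage_algebra (Gspace :: 'a measure set) (\<lambda>g. emeasure g B) borel)"

definition restr :: "'a::polish_space measure \<Rightarrow> 'a set \<Rightarrow> 'a measure" where
  "restr g R = density g (indicator R)"

definition recomb_elem :: "nat \<Rightarrow> (nat \<Rightarrow> 'a::polish_space set) \<Rightarrow> (nat \<Rightarrow> 'a measure) \<Rightarrow> 'a measure" where
  "recomb_elem K A gs =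
     measure_of UNIV (sets (borel :: 'a measure)) (\<lambda>B. \<Sum>i<K. emeasure (gs i) (B \<inter> A i))"

definition recombine :: "nat \<Rightarrow> (nat \<Rightarrow> 'a::polish_space set) \<Rightarrow> 'a measure measure \<Rightarrow> 'a measure measure" where
  "recombine K A Q = distr (PiM {..<K} (\<lambda>_. Q)) Galg (recomb_elem K A)"

definition select :: "nat \<Rightarrow> ('a::polish_space measure \<Rightarrow> real) \<Rightarrow> 'a measure measure \<Rightarrow> 'a measure measure" where
  "select n S P =
     density P (\<lambda>g. ennreal (exp (- S g / real n) / (\<integral>x. exp (- S x / real n) \<partial>P)))"

definition is_rcd :: "'a::polish_space measure measure \<Rightarrow> 'a set \<Rightarrow> ('a measure \<Rightarrow> 'a measure measure) \<Rightarrow> bool" where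
  "is_rcd Q R \<kappa> \<longleftrightarrow>
     \<kappa> \<in> Galg \<rightarrow>\<^sub>M prob_algebra Galg \<and>
     (\<forall>B\<in>sets (Galg :: 'a measure measure). \<forall>C\<in>sets (Galg :: 'a measure measure).
        emeasure Q ({x\<in>space Q. restr x R \<in> B} \<inter> C) =
        (\<integral>\<^sup>+x. indicator B (restr x R) * emeasure (\<kappa> (restr x R)) C \<partial>Q))"

definition Shat :: "nat \<Rightarrow> ('a::polish_space measure \<Rightarrow> real) \<Rightarrow> 'a measure measure \<Rightarrow> nat \<Rightarrow>
    (nat \<Rightarrow> 'a set) \<Rightarrow> (nat \<Rightarrow> 'a measure \<Rightarrow> 'a measure measure) \<Rightarrow> 'a measure \<Rightarrow> real" where
  "Shat n S Q K A \<kappa> g =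
     - real n * (\<Sum>i<K. ln (\<integral>x. exp (- S x / real n) \<partial>(\<kappa> i (restr g (A i))))
                       - ln (\<integral>x. exp (- S x / real n) \<partial>Q))"

end

theory Submission
  imports Defs
begin

text \<open>
  Under the K-fold product of the selected law \<open>S_n Q\<close>, whose density with respect to Q is
  e^{-S/n}/Z, the recombined measure depends on the i-th copy only through its restriction to A_i.
  The defining property of a regular conditional distribution shows that the law of X_{A_i} under
  \<open>S_n Q\<close> has density Q[e^{-S/n} | X_{A_i}]/Z with respect to its law under Q. Hence the tuple of
  restrictions has, relative to its law under Q^K, the product of these densities. Since the
  recombined measure g satisfies g_{A_i} = g^(i)_{A_i}, this product is the function
  e^{-Shat(g)/n} of g, and pushing forward to g yields the claimed density.
\<close>

lemma space_Galg: "space (Galg :: 'a::polish_space measure measure) = Gspace"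
  unfolding Galg_def by (subst space_Sup_eq_UN) auto

lemma measurable_emeasure_Galg:
  "B \<in> sets (borel :: 'a::polish_space measure) \<Longrightarrow>
    (\<lambda>g. emeasure g B) \<in> (Galg :: 'a measure measure) \<rightarrow>\<^sub>M borel"
  unfolding Galg_def by (rule measurable_SUP1[where i=B]) (auto intro: measurable_vimage_algebra1)

lemma measurable_GalgI:
  assumes "\<And>x. x \<in> space N \<Longrightarrow> f x \<in> (Gspace :: 'a::polish_space measure set)"
    and "\<And>B. B \<in> sets (borel :: 'a measure) \<Longrightarrow> (\<lambda>x. emeasure (f x) B) \<in> N \<rightarrow>\<^sub>M borel"
  shows "f \<in> N \<rightarrow>\<^sub>M (Galg :: 'a measure measure)"
  unfolding Galg_def by (rule measurable_SUP2) (auto intro!: measurable_vimage_algebra2 assms)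

lemma sets_restr [simp]: "sets (restr g R) = sets g"
  by (simp add: restr_def)

lemma emeasure_restr:
  assumes g: "g \<in> Gspace" and R: "R \<in> sets borel" and B: "B \<in> sets borel"
  shows "emeasure (restr g R) B = emeasure g (B \<inter> R)"
proof -
  have sets_g: "sets g = sets borel" using g by (simp add: Gspace_def)
  have "emeasure (restr g R) B = (\<integral>\<^sup>+x. indicator R x * indicator B x \<partial>g)"
    unfolding restr_def using R B sets_g by (subst emeasure_density) auto
  also have "\<dots> = (\<integral>\<^sup>+x. indicator (B \<inter> R) x \<partial>g)"
    by (intro nn_integral_cong) (auto split: split_indicator)
  finally show ?thesis using B R sets_g by simp
qed

lemma restr_in_Gspace: "g \<in> Gspace \<Longrightarrow> R \<in> sets borel \<Longrightarrow> restr g R \<in> Gspace"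
  using emeasure_restr[of g R] unfolding Gspace_def by auto

lemma measurable_restr:
  assumes R: "R \<in> sets borel"
  shows "(\<lambda>g. restr g R) \<in> (Galg :: 'a::polish_space measure measure) \<rightarrow>\<^sub>M Galg"
proof (rule measurable_GalgI)
  show "restr g R \<in> Gspace" if "g \<in> space (Galg :: 'a measure measure)" for g
    using that R by (simp add: space_Galg restr_in_Gspace)
  show "(\<lambda>g. emeasure (restr g R) B) \<in> (Galg :: 'a measure measure) \<rightarrow>\<^sub>M borel"
    if B: "B \<in> sets borel" for B
    using measurable_emeasure_Galg[of "B \<inter> R"] B R
    by (subst measurable_cong[where g="\<lambda>g. emeasure g (B \<inter> R)"])
      (auto simp: space_Galg emeasure_restr)
qed

lemma sets_recomb_elem [simp]:
  "sets (recomb_elem K A gs) = sets (borel :: 'a::polish_space measure)"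
  using sets.sigma_sets_eq[of "borel :: 'a measure"] unfolding recomb_elem_def
  by (subst sets_measure_of) auto

lemma emeasure_recomb_elem:
  assumes gs: "\<And>i. i < K \<Longrightarrow> gs i \<in> Gspace" and A: "\<And>i. i < K \<Longrightarrow> A i \<in> sets borel"
    and B: "B \<in> sets (borel :: 'a::polish_space measure)"
  shows "emeasure (recomb_elem K A gs) B = (\<Sum>i<K. emeasure (gs i) (B \<inter> A i))"
  unfolding recomb_elem_def
proof (rule emeasure_measure_of_sigma)
  show "sigma_algebra UNIV (sets (borel :: 'a measure))"
    using sets.sigma_algebra_axioms[of "borel :: 'a measure"] by simp
  show "countably_additive (sets borel) (\<lambda>B. \<Sum>i<K. emeasure (gs i) (B \<inter> A i))"
    unfolding countably_additive_def
  proof (intro allI impI)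
    fix F :: "nat \<Rightarrow> 'a set"
    assume F: "range F \<subseteq> sets borel" "disjoint_family F"
    have "(\<Sum>j. emeasure (gs i) (F j \<inter> A i)) = emeasure (gs i) (\<Union> (range F) \<inter> A i)"
      if i: "i \<in> {..<K}" for i
    proof -
      have "sets (gs i) = sets borel" using gs i by (simp add: Gspace_def)
      moreover have "disjoint_family (\<lambda>j. F j \<inter> A i)"
        using F(2) by (rule disjoint_family_on_bisimulation) auto
      ultimately have "(\<Sum>j. emeasure (gs i) (F j \<inter> A i)) = emeasure (gs i) (\<Union>j. F j \<inter> A i)"
        using F A i by (intro suminf_emeasure) auto
      also have "(\<Union>j. F j \<inter> A i) = \<Union> (range F) \<inter> A i" by auto
      finally show ?thesis .
    qed
    then show "(\<Sum>j. \<Sum>i<K. emeasure (gs i) (F j \<inter> A i)) =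
        (\<Sum>i<K. emeasure (gs i) (\<Union> (range F) \<inter> A i))"
      by (simp add: suminf_sum)
  qed
qed (use B in \<open>simp_all add: positive_def\<close>)

lemma recomb_elem_in_Gspace:
  assumes gs: "\<And>i. i < K \<Longrightarrow> gs i \<in> Gspace" and A: "\<And>i. i < K \<Longrightarrow> A i \<in> sets borel"
  shows "recomb_elem K A gs \<in> (Gspace :: 'a::polish_space measure set)"
  unfolding Gspace_def
proof (intro CollectI conjI ballI)
  fix B :: "'a set" assume B: "B \<in> sets borel"
  have "\<exists>m. emeasure (gs i) (B \<inter> A i) = of_nat m" if i: "i < K" for i
  proof -
    have "B \<inter> A i \<in> sets borel" using A[OF i] B by simp
    then show ?thesis using gs[OF i] unfolding Gspace_def by blast
  qed
  then obtain m where m: "\<And>i. i < K \<Longrightarrow> emeasure (gs i) (B \<inter> A i) = of_nat (m i)"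
    by metis
  have "emeasure (recomb_elem K A gs) B = (\<Sum>i<K. of_nat (m i))"
    using m by (simp add: emeasure_recomb_elem[OF gs A B])
  also have "\<dots> = of_nat (\<Sum>i<K. m i)"
    by (rule of_nat_sum[symmetric])
  finally show "emeasure (recomb_elem K A gs) B \<in> range of_nat"
    by (rule range_eqI)
qed simp

lemma measurable_recomb_elem:
  assumes A: "\<And>i. i < K \<Longrightarrow> A i \<in> sets borel"
  shows "recomb_elem K A \<in> PiM {..<K} (\<lambda>_. Galg :: 'a::polish_space measure measure) \<rightarrow>\<^sub>M Galg"
proof (rule measurable_GalgI)
  show "recomb_elem K A gs \<in> Gspace"
    if "gs \<in> space (PiM {..<K} (\<lambda>_. Galg :: 'a measure measure))" for gs
    using that by (intro recomb_elem_in_Gspace A) (auto simp: space_PiM space_Galg)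
  fix B :: "'a set" assume B: "B \<in> sets borel"
  have "(\<lambda>gs. \<Sum>i<K. emeasure (gs i) (B \<inter> A i))
      \<in> PiM {..<K} (\<lambda>_. Galg :: 'a measure measure) \<rightarrow>\<^sub>M borel"
    using B A
    by (intro borel_measurable_sum measurable_compose[OF measurable_component_singleton]
        measurable_emeasure_Galg) auto
  then show "(\<lambda>gs. emeasure (recomb_elem K A gs) B)
      \<in> PiM {..<K} (\<lambda>_. Galg :: 'a measure measure) \<rightarrow>\<^sub>M borel"
    using B A by (subst measurable_cong[OF emeasure_recomb_elem]) (auto simp: space_PiM space_Galg)
qed

lemma restr_recomb_elem:
  assumes gs: "\<And>i. i < K \<Longrightarrow> gs i \<in> Gspace" and A: "\<And>i. i < K \<Longrightarrow> A i \<in> sets borel"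
    and disj: "disjoint_family_on A {..<K}" and i: "i < K"
  shows "restr (recomb_elem K A gs) (A i) = restr (gs i) (A i :: 'a::polish_space set)"
proof (rule measure_eqI)
  show "sets (restr (recomb_elem K A gs) (A i)) = sets (restr (gs i) (A i))"
    using gs[OF i] by (simp add: Gspace_def)
  fix B assume "B \<in> sets (restr (recomb_elem K A gs) (A i))"
  then have B: "B \<in> sets borel" by simp
  have "A i \<inter> A k = {}" if "k < K" "k \<noteq> i" for k
    using disj that i unfolding disjoint_family_on_def by auto
  then have "emeasure (gs k) (B \<inter> A i \<inter> A k) = (if k = i then emeasure (gs i) (B \<inter> A i) else 0)"
    if "k < K" for k
    using that by (auto simp: Int_assoc)
  then have "emeasure (restr (recomb_elem K A gs) (A i)) B =
      (\<Sum>k<K. if k = i then emeasure (gs i) (B \<inter> A i) else 0)"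
    using B A i
    by (simp add: emeasure_restr recomb_elem_in_Gspace[OF gs A] emeasure_recomb_elem[OF gs A])
  also have "\<dots> = emeasure (restr (gs i) (A i)) B"
    using B A i gs by (simp add: emeasure_restr)
  finally show "emeasure (restr (recomb_elem K A gs) (A i)) B = emeasure (restr (gs i) (A i)) B" .
qed

lemma recomb_elem_restr:
  assumes gs: "\<And>i. i < K \<Longrightarrow> gs i \<in> Gspace" and A: "\<And>i. i < K \<Longrightarrow> A i \<in> sets borel"
  shows "recomb_elem K A (\<lambda>i\<in>{..<K}. restr (gs i) (A i)) =
    recomb_elem K A (gs :: nat \<Rightarrow> 'a::polish_space measure)"
  unfolding recomb_elem_def
proof (rule measure_of_eq)
  fix B assume "B \<in> sigma_sets UNIV (sets (borel :: 'a measure))"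
  then have "B \<in> sets borel" using sets.sigma_sets_eq[of "borel :: 'a measure"] by simp
  then show "(\<Sum>i<K. emeasure ((\<lambda>i\<in>{..<K}. restr (gs i) (A i)) i) (B \<inter> A i)) =
      (\<Sum>i<K. emeasure (gs i) (B \<inter> A i))"
    using A gs by (intro sum.cong refl) (simp add: emeasure_restr Int_assoc)
qed simp

lemma (in prob_space) integral_pos:
  fixes f :: "'a \<Rightarrow> real"
  assumes f: "integrable M f" and pos: "\<And>x. x \<in> space M \<Longrightarrow> 0 < f x"
  shows "0 < integral\<^sup>L M f"
proof -
  have "integral\<^sup>L M f \<noteq> 0"
  proof
    assume "integral\<^sup>L M f = 0"
    then have "AE x in M. f x = 0"
      using integral_nonneg_eq_0_iff_AE[OF f] pos by (auto intro: less_imp_le)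
    moreover have "AE x in M. f x \<noteq> 0"
      using pos by (auto intro!: AE_I2 simp: less_le)
    ultimately have "AE x in M. False"
      by eventually_elim simp
    then show False by simp
  qed
  moreover have "0 \<le> integral\<^sup>L M f"
    using pos by (intro integral_nonneg_AE AE_I2) (auto intro: less_imp_le)
  ultimately show ?thesis by simp
qed

lemma prob_space_density_divide_integral:
  assumes f: "integrable M f" and nonneg: "\<And>x. x \<in> space M \<Longrightarrow> 0 \<le> f x"
    and pos: "0 < integral\<^sup>L M f"
  shows "prob_space (density M (\<lambda>x. ennreal (f x / integral\<^sup>L M f)))"
proof
  have "emeasure (density M (\<lambda>x. ennreal (f x / integral\<^sup>L M f))) (space M) =
      (\<integral>\<^sup>+x. ennreal (f x / integral\<^sup>L M f) \<partial>M)"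
    using f by (subst emeasure_density) (auto intro!: nn_integral_cong split: split_indicator)
  also have "\<dots> = ennreal (\<integral>x. f x / integral\<^sup>L M f \<partial>M)"
    using f nonneg pos by (intro nn_integral_eq_integral) auto
  also have "\<dots> = 1" using pos by simp
  finally show "emeasure (density M (\<lambda>x. ennreal (f x / integral\<^sup>L M f)))
      (space (density M (\<lambda>x. ennreal (f x / integral\<^sup>L M f)))) = 1" by simp
qed

lemma indicator_PiE_eq_prod:
  assumes "finite I" "x \<in> extensional I"
  shows "(indicator (PiE I X) x :: 'b::comm_semiring_1) = (\<Prod>i\<in>I. indicator (X i) (x i))"
proof (cases "\<forall>i\<in>I. x i \<in> X i")
  case False
  then obtain i where "i \<in> I" "x i \<notin> X i" by blast
  then show ?thesis using assms by (auto simp: PiE_iff indicator_def intro!: prod_zero)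
qed (use assms in \<open>simp add: PiE_iff indicator_def\<close>)

lemma (in product_sigma_finite) emeasure_density_PiM_prod:
  assumes I: "finite I" and f: "\<And>i. i \<in> I \<Longrightarrow> f i \<in> borel_measurable (M i)"
    and X: "\<And>i. i \<in> I \<Longrightarrow> X i \<in> sets (M i)"
  shows "emeasure (density (PiM I M) (\<lambda>x. \<Prod>i\<in>I. f i (x i))) (PiE I X) =
    (\<Prod>i\<in>I. emeasure (density (M i) (f i)) (X i))"
proof -
  have "emeasure (density (PiM I M) (\<lambda>x. \<Prod>i\<in>I. f i (x i))) (PiE I X) =
      (\<integral>\<^sup>+x. (\<Prod>i\<in>I. f i (x i)) * indicator (PiE I X) x \<partial>PiM I M)"
    using I f X by (intro emeasure_density borel_measurable_prod_ennreal sets_PiM_I_finite) auto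
  also have "\<dots> = (\<integral>\<^sup>+x. (\<Prod>i\<in>I. f i (x i) * indicator (X i) (x i)) \<partial>PiM I M)"
    using I
    by (intro nn_integral_cong) (simp add: space_PiM PiE_iff indicator_PiE_eq_prod prod.distrib)
  also have "\<dots> = (\<Prod>i\<in>I. \<integral>\<^sup>+x. f i x * indicator (X i) x \<partial>M i)"
    using I f X by (intro product_nn_integral_prod) auto
  also have "\<dots> = (\<Prod>i\<in>I. emeasure (density (M i) (f i)) (X i))"
    using f X by (intro prod.cong refl emeasure_density[symmetric]) auto
  finally show ?thesis .
qed

lemma distr_PiM_coordinatewise_eq_density:
  fixes r :: "'i \<Rightarrow> 'a \<Rightarrow> 'b"
  assumes I: "finite I" and M: "sigma_finite_measure M"
    and M': "prob_space M'" and sets_M': "sets M' = sets M"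
    and r: "\<And>i. i \<in> I \<Longrightarrow> r i \<in> M \<rightarrow>\<^sub>M N i"
    and \<phi>: "\<And>i. i \<in> I \<Longrightarrow> \<phi> i \<in> borel_measurable M"
    and marginal: "\<And>i. i \<in> I \<Longrightarrow> distr M' (N i) (r i) = distr (density M (\<phi> i)) (N i) (r i)"
  shows "distr (PiM I (\<lambda>_. M')) (PiM I N) (\<lambda>x. \<lambda>i\<in>I. r i (x i)) =
    distr (density (PiM I (\<lambda>_. M)) (\<lambda>x. \<Prod>i\<in>I. \<phi> i (x i))) (PiM I N) (\<lambda>x. \<lambda>i\<in>I. r i (x i))"
    (is "distr ?P' _ ?r = distr ?D _ ?r")
proof -
  interpret M: product_sigma_finite "\<lambda>_. M"
    using M by (simp add: product_sigma_finite_def)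
  interpret M': product_sigma_finite "\<lambda>_. M'"
    using M' by (simp add: product_sigma_finite_def prob_space_imp_sigma_finite)
  interpret P': prob_space ?P'
    using M' by (intro prob_space_PiM) auto
  have sets_P': "sets ?P' = sets (PiM I (\<lambda>_. M))"
    using sets_M' by (intro sets_PiM_cong) auto
  have space_M': "space M' = space M" using sets_M' by (rule sets_eq_imp_space_eq)
  have r_P: "?r \<in> PiM I (\<lambda>_. M) \<rightarrow>\<^sub>M PiM I N"
    using r
    by (intro measurable_restrict measurable_compose[OF measurable_component_singleton]) auto
  have r_P': "?r \<in> ?P' \<rightarrow>\<^sub>M PiM I N" and r_D: "?r \<in> ?D \<rightarrow>\<^sub>M PiM I N"
    using r_P by (simp_all add: measurable_cong_sets[OF sets_P' refl])
  show ?thesis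
  proof (rule measure_eqI_PiM_finite[OF I])
    fix B assume B: "\<And>i. i \<in> I \<Longrightarrow> B i \<in> sets (N i)"
    define X where "X i = r i -` B i \<inter> space M" for i
    have X: "X i \<in> sets M" if "i \<in> I" for i
      unfolding X_def using measurable_sets[OF r B] that by simp
    have preimage: "?r -` PiE I B \<inter> space (PiM I (\<lambda>_. M)) = PiE I X"
      by (auto simp: X_def space_PiM PiE_iff)
    have "emeasure (distr ?P' (PiM I N) ?r) (PiE I B) = emeasure ?P' (PiE I X)"
      using r_P' B preimage
      by (subst emeasure_distr) (auto simp: space_PiM space_M' intro!: sets_PiM_I_finite I)
    also have "\<dots> = (\<Prod>i\<in>I. emeasure M' (X i))"
      using I X sets_M' by (intro M'.emeasure_PiM) auto
    also have "\<dots> = (\<Prod>i\<in>I. emeasure (density M (\<phi> i)) (X i))"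
    proof (rule prod.cong[OF refl])
      fix i assume i: "i \<in> I"
      have "emeasure (distr M' (N i) (r i)) (B i) =
          emeasure (distr (density M (\<phi> i)) (N i) (r i)) (B i)"
        using marginal[OF i] by simp
      then show "emeasure M' (X i) = emeasure (density M (\<phi> i)) (X i)"
        using r[OF i] B[OF i] sets_M'
        by (simp add: emeasure_distr X_def space_M' measurable_cong_sets[OF sets_M' refl])
    qed
    also have "\<dots> = emeasure ?D (PiE I X)"
      using I \<phi> X by (intro M.emeasure_density_PiM_prod[symmetric]) auto
    also have "\<dots> = emeasure (distr ?D (PiM I N) ?r) (PiE I B)"
      using r_D B preimage by (subst emeasure_distr) (auto intro!: sets_PiM_I_finite I)
    finally show "emeasure (distr ?P' (PiM I N) ?r) (PiE I B) =
        emeasure (distr ?D (PiM I N) ?r) (PiE I B)" .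
  next
    interpret prob_space "distr ?P' (PiM I N) ?r"
      using r_P' by (rule P'.prob_space_distr)
    show "range (\<lambda>_::nat. space (PiM I N)) \<subseteq> prod_algebra I N"
      by (auto simp: space_PiM intro!: prod_algebraI_finite I)
    show "emeasure (distr ?P' (PiM I N) ?r) (space (PiM I N)) \<noteq> \<infinity>" for j :: nat
      using emeasure_space_1 by simp
  qed auto
qed

lemma distr_recomb_elem_eqI:
  fixes K :: nat and A :: "nat \<Rightarrow> 'a::polish_space set"
  defines "G \<equiv> PiM {..<K} (\<lambda>_. Galg :: 'a measure measure)"
    and "rr \<equiv> \<lambda>gs. \<lambda>i\<in>{..<K}. restr (gs i) (A i)"
  assumes A: "\<And>i. i < K \<Longrightarrow> A i \<in> sets borel"
    and sets_M1: "sets M1 = sets G" and sets_M2: "sets M2 = sets G"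
    and eq: "distr M1 G rr = distr M2 G rr"
  shows "distr M1 Galg (recomb_elem K A) = distr M2 Galg (recomb_elem K A)"
proof -
  have rr: "rr \<in> G \<rightarrow>\<^sub>M G"
    unfolding rr_def G_def using A
    by (intro measurable_restrict
        measurable_compose[OF measurable_component_singleton, where g="\<lambda>g. restr g _"]
        measurable_restr) auto
  have "distr M Galg (recomb_elem K A) = distr (distr M G rr) Galg (recomb_elem K A)"
    if sets_M: "sets M = sets G" for M
  proof -
    have "distr M Galg (recomb_elem K A) = distr M Galg (recomb_elem K A \<circ> rr)"
      using sets_eq_imp_space_eq[OF sets_M] A
      by (intro distr_cong)
        (auto simp: G_def rr_def space_PiM space_Galg intro!: recomb_elem_restr[symmetric])
    also have "\<dots> = distr (distr M G rr) Galg (recomb_elem K A)"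
      using rr A unfolding G_def
      by (intro distr_distr[symmetric] measurable_recomb_elem)
        (simp_all add: measurable_cong_sets[OF sets_M refl] G_def)
    finally show ?thesis .
  qed
  from this[OF sets_M1] this[OF sets_M2] eq show ?thesis by simp
qed

lemma
  assumes "is_rcd Q R \<kappa>" and "h \<in> space Galg"
  shows is_rcd_prob_space: "prob_space (\<kappa> h)"
    and sets_is_rcd: "sets (\<kappa> h) = sets Galg"
  using assms measurable_space[of \<kappa> Galg "prob_algebra Galg" h]
  by (auto simp: is_rcd_def space_prob_algebra)

lemma measurable_nn_integral_is_rcd:
  assumes "is_rcd Q R \<kappa>" and "f \<in> borel_measurable Galg"
  shows "(\<lambda>h. \<integral>\<^sup>+y. f y \<partial>\<kappa> h) \<in> borel_measurable Galg"
  using assms unfolding is_rcd_def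
  by (intro measurable_compose[OF measurable_prob_algebraD nn_integral_measurable_subprob_algebra])
    auto

lemma nn_integral_is_rcd:
  fixes Q :: "'a::polish_space measure measure"
  assumes rcd: "is_rcd Q R \<kappa>" and sets_Q: "sets Q = sets Galg" and Q: "prob_space Q"
    and R: "R \<in> sets borel" and B: "B \<in> sets Galg" and f: "f \<in> borel_measurable Galg"
  shows "(\<integral>\<^sup>+x. indicator B (restr x R) * f x \<partial>Q) =
    (\<integral>\<^sup>+x. indicator B (restr x R) * (\<integral>\<^sup>+y. f y \<partial>\<kappa> (restr x R)) \<partial>Q)"
proof -
  define r where "r x = restr x R" for x :: "'a measure"
  define k where "k x = \<kappa> (r x)" for x
  define \<nu> where "\<nu> = density Q (\<lambda>x. indicator B (r x))"
  have r: "r \<in> Q \<rightarrow>\<^sub>M Galg"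
    unfolding r_def using measurable_restr[OF R] by (simp add: measurable_cong_sets[OF sets_Q refl])
  have k: "k \<in> Q \<rightarrow>\<^sub>M subprob_algebra Galg"
    unfolding k_def using rcd
    by (intro measurable_compose[OF r measurable_prob_algebraD]) (simp add: is_rcd_def)
  have ind: "(\<lambda>x. indicator B (r x)) \<in> Q \<rightarrow>\<^sub>M (borel :: ennreal measure)"
    using B by (intro measurable_compose[OF r]) auto
  have sets_\<nu>: "sets \<nu> = sets Q" by (simp add: \<nu>_def)
  have k_\<nu>: "k \<in> \<nu> \<rightarrow>\<^sub>M subprob_algebra Galg"
    using k by (simp add: measurable_cong_sets[OF sets_\<nu> refl])
  have space_\<nu>: "space \<nu> \<noteq> {}"
    using prob_space.not_empty[OF Q] by (simp add: \<nu>_def)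
  \<comment> \<open>The rcd property says that mixing the kernel \<open>k\<close> against \<open>\<nu>\<close> reproduces \<open>\<nu>\<close>.\<close>
  have \<nu>_bind: "\<nu> = bind \<nu> k"
  proof (rule measure_eqI)
    show "sets \<nu> = sets (bind \<nu> k)"
      using sets_bind_measurable[OF k_\<nu> space_\<nu>] sets_\<nu> sets_Q by simp
    fix C assume "C \<in> sets \<nu>"
    then have C: "C \<in> sets Q" by (simp add: sets_\<nu>)
    have "emeasure \<nu> C = (\<integral>\<^sup>+x. indicator ({x\<in>space Q. r x \<in> B} \<inter> C) x \<partial>Q)"
      unfolding \<nu>_def using ind C
      by (subst emeasure_density) (auto intro!: nn_integral_cong split: split_indicator)
    also have "\<dots> = emeasure Q ({x\<in>space Q. r x \<in> B} \<inter> C)"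
      using measurable_sets[OF r B] C
      by (intro nn_integral_indicator sets.Int) (auto simp: vimage_def Int_def conj_commute)
    also have "\<dots> = (\<integral>\<^sup>+x. indicator B (r x) * emeasure (k x) C \<partial>Q)"
      using rcd B C sets_Q unfolding is_rcd_def r_def k_def by auto
    also have "\<dots> = (\<integral>\<^sup>+x. emeasure (k x) C \<partial>\<nu>)"
      unfolding \<nu>_def using ind C sets_Q
      by (subst nn_integral_density)
        (auto intro!: measurable_compose[OF k measurable_emeasure_subprob_algebra])
    also have "\<dots> = emeasure (bind \<nu> k) C"
      using space_\<nu> k_\<nu> C sets_Q by (subst emeasure_bind) (auto simp: sets_\<nu>)
    finally show "emeasure \<nu> C = emeasure (bind \<nu> k) C" .
  qed
  have "(\<integral>\<^sup>+x. indicator B (r x) * f x \<partial>Q) = (\<integral>\<^sup>+x. f x \<partial>\<nu>)"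
    unfolding \<nu>_def using ind f
    by (simp add: nn_integral_density measurable_cong_sets[OF sets_Q refl])
  also have "\<dots> = (\<integral>\<^sup>+x. \<integral>\<^sup>+y. f y \<partial>k x \<partial>\<nu>)"
    by (subst \<nu>_bind) (rule nn_integral_bind[OF f k_\<nu>])
  also have "\<dots> = (\<integral>\<^sup>+x. indicator B (r x) * (\<integral>\<^sup>+y. f y \<partial>k x) \<partial>Q)"
    unfolding \<nu>_def k_def
    by (intro nn_integral_density ind
        measurable_compose[OF r measurable_nn_integral_is_rcd[OF rcd f]])
  finally show ?thesis by (simp add: r_def k_def)
qed

lemma distr_restr_density_is_rcd:
  fixes Q :: "'a::polish_space measure measure"
  assumes rcd: "is_rcd Q R \<kappa>" and sets_Q: "sets Q = sets Galg" and Q: "prob_space Q"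
    and R: "R \<in> sets borel" and f: "f \<in> borel_measurable Galg"
  shows "distr (density Q f) Galg (\<lambda>x. restr x R) =
    distr (density Q (\<lambda>x. \<integral>\<^sup>+y. f y \<partial>\<kappa> (restr x R))) Galg (\<lambda>x. restr x R)"
proof (rule measure_eqI)
  have r: "(\<lambda>x. restr x R) \<in> Q \<rightarrow>\<^sub>M Galg"
    using measurable_restr[OF R] by (simp add: measurable_cong_sets[OF sets_Q refl])
  have distr_density: "emeasure (distr (density Q g) Galg (\<lambda>x. restr x R)) B =
      (\<integral>\<^sup>+x. indicator B (restr x R) * g x \<partial>Q)"
    if g: "g \<in> borel_measurable Q" and B: "B \<in> sets Galg" for g B
    using g B r measurable_sets[OF r B]
    by (subst emeasure_distr)
      (auto simp: emeasure_density intro!: nn_integral_cong split: split_indicator)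
  have f_Q: "f \<in> borel_measurable Q"
    using f by (simp add: measurable_cong_sets[OF sets_Q refl])
  have kernel: "(\<lambda>x. \<integral>\<^sup>+y. f y \<partial>\<kappa> (restr x R)) \<in> borel_measurable Q"
    by (rule measurable_compose[OF r measurable_nn_integral_is_rcd[OF rcd f]])
  fix B assume "B \<in> sets (distr (density Q f) Galg (\<lambda>x. restr x R))"
  then have B: "B \<in> sets Galg" by simp
  show "emeasure (distr (density Q f) Galg (\<lambda>x. restr x R)) B =
      emeasure (distr (density Q (\<lambda>x. \<integral>\<^sup>+y. f y \<partial>\<kappa> (restr x R))) Galg (\<lambda>x. restr x R)) B"
    using nn_integral_is_rcd[OF rcd sets_Q Q R B f]
    by (simp add: distr_density[OF f_Q B] distr_density[OF kernel B])
qed simp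

lemma exp_Shat:
  assumes n: "n > 0"
    and c: "\<And>i. i < K \<Longrightarrow> 0 < (\<integral>x. exp (- S x / real n) \<partial>\<kappa> i (restr g (A i)))"
    and Z: "0 < (\<integral>x. exp (- S x / real n) \<partial>Q)"
  shows "exp (- Shat n S Q K A \<kappa> g / real n) =
    (\<Prod>i<K. (\<integral>x. exp (- S x / real n) \<partial>\<kappa> i (restr g (A i))) / (\<integral>x. exp (- S x / real n) \<partial>Q))"
  unfolding Shat_def using n c Z by (simp add: exp_sum exp_diff)

definition select_density ::
    "nat \<Rightarrow> ('a::polish_space measure \<Rightarrow> real) \<Rightarrow> 'a measure measure \<Rightarrow> 'a measure \<Rightarrow> ennreal" where
  "select_density n S Q g = ennreal (exp (- S g / real n) / (\<integral>x. exp (- S x / real n) \<partial>Q))"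

lemma select_eq_density: "select n S Q = density Q (select_density n S Q)"
  by (simp add: select_def select_density_def[abs_def])

locale selection_recombination =
  fixes S :: "'a::polish_space measure \<Rightarrow> real"
    and Q :: "'a measure measure"
    and K n :: nat
    and A :: "nat \<Rightarrow> 'a set"
    and \<kappa> :: "nat \<Rightarrow> 'a measure \<Rightarrow> 'a measure measure"
  assumes S_meas: "S \<in> borel_measurable Galg"
    and S_nonneg: "\<And>g. g \<in> space Galg \<Longrightarrow> S g \<ge> 0"
    and n_pos: "n > 0"
    and A_borel: "\<And>i. i < K \<Longrightarrow> A i \<in> sets borel"
    and A_disj: "disjoint_family_on A {..<K}"
    and Q_prob: "prob_space Q"
    and Q_sets: "sets Q = sets Galg"
    and \<kappa>_rcd: "\<And>i. i < K \<Longrightarrow> is_rcd Q (A i) (\<kappa> i)"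
begin

lemma
  assumes M: "prob_space M" and sets_M: "sets M = sets Galg"
  shows integrable_exp_S: "integrable M (\<lambda>x. exp (- S x / real n))"
    and integral_exp_S_pos: "0 < (\<integral>x. exp (- S x / real n) \<partial>M)"
proof -
  interpret prob_space M by fact
  have "S \<in> borel_measurable M"
    using S_meas by (simp add: measurable_cong_sets[OF sets_M refl])
  moreover have "0 \<le> S x" if "x \<in> space M" for x
    using S_nonneg that sets_eq_imp_space_eq[OF sets_M] by simp
  ultimately show int: "integrable M (\<lambda>x. exp (- S x / real n))"
    by (intro integrable_const_bound[where B=1]) auto
  show "0 < (\<integral>x. exp (- S x / real n) \<partial>M)"
    using int by (rule integral_pos) simp
qed

lemma measurable_select_density: "select_density n S Q \<in> borel_measurable Galg"
  unfolding select_density_def[abs_def] using S_meas by measurable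

lemma prob_space_select: "prob_space (select n S Q)"
  using prob_space_density_divide_integral[of Q "\<lambda>x. exp (- S x / real n)"]
    integrable_exp_S[OF Q_prob Q_sets] integral_exp_S_pos[OF Q_prob Q_sets]
  unfolding select_def by simp

lemma measurable_cond_select_density:
  assumes i: "i < K"
  shows "(\<lambda>x. \<integral>\<^sup>+y. select_density n S Q y \<partial>\<kappa> i (restr x (A i))) \<in> borel_measurable Galg"
  using measurable_restr[OF A_borel[OF i]]
    measurable_nn_integral_is_rcd[OF \<kappa>_rcd[OF i] measurable_select_density]
  by (rule measurable_compose)

lemma measurable_Shat: "Shat n S Q K A \<kappa> \<in> borel_measurable Galg"
proof -
  have "(\<lambda>g. \<integral>x. exp (- S x / real n) \<partial>\<kappa> i (restr g (A i))) \<in> borel_measurable Galg"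
    if i: "i < K" for i
  proof (rule measurable_compose[OF measurable_restr[OF A_borel[OF i]]])
    show "(\<lambda>h. \<integral>x. exp (- S x / real n) \<partial>\<kappa> i h) \<in> borel_measurable Galg"
      using \<kappa>_rcd[OF i] S_meas unfolding is_rcd_def
      by (intro measurable_compose[OF measurable_prob_algebraD integral_measurable_subprob_algebra])
        auto
  qed
  then show ?thesis
    unfolding Shat_def by (intro borel_measurable_times borel_measurable_sum borel_measurable_diff
        borel_measurable_ln) auto
qed

lemma recombine_select:
  "recombine K A (select n S Q) =
    distr (density (PiM {..<K} (\<lambda>_. Q))
        (\<lambda>gs. \<Prod>i<K. \<integral>\<^sup>+y. select_density n S Q y \<partial>\<kappa> i (restr (gs i) (A i))))
      Galg (recomb_elem K A)"
proof -
  define \<phi> where "\<phi> = (\<lambda>i x. \<integral>\<^sup>+y. select_density n S Q y \<partial>\<kappa> i (restr x (A i)))"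
  define G where "G = PiM {..<K} (\<lambda>_. Galg :: 'a measure measure)"
  have \<phi>: "\<phi> i \<in> borel_measurable Q" if "i < K" for i
    unfolding \<phi>_def using measurable_cond_select_density[OF that]
    by (simp add: measurable_cong_sets[OF Q_sets refl])
  have "distr (PiM {..<K} (\<lambda>_. select n S Q)) G (\<lambda>gs. \<lambda>i\<in>{..<K}. restr (gs i) (A i)) =
      distr (density (PiM {..<K} (\<lambda>_. Q)) (\<lambda>gs. \<Prod>i<K. \<phi> i (gs i))) G
        (\<lambda>gs. \<lambda>i\<in>{..<K}. restr (gs i) (A i))"
    unfolding G_def
  proof (rule distr_PiM_coordinatewise_eq_density)
    show "sigma_finite_measure Q" using Q_prob by (rule prob_space_imp_sigma_finite)
    show "distr (select n S Q) Galg (\<lambda>g. restr g (A i)) =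
        distr (density Q (\<phi> i)) Galg (\<lambda>g. restr g (A i))" if "i \<in> {..<K}" for i
      unfolding select_eq_density \<phi>_def using that
      by (intro distr_restr_density_is_rcd \<kappa>_rcd Q_sets Q_prob A_borel measurable_select_density)
        auto
    show "(\<lambda>g. restr g (A i)) \<in> Q \<rightarrow>\<^sub>M Galg" if "i \<in> {..<K}" for i
      using measurable_restr[OF A_borel] that by (simp add: measurable_cong_sets[OF Q_sets refl])
  qed (use prob_space_select \<phi> in \<open>auto simp: select_eq_density\<close>)
  then show ?thesis
    unfolding recombine_def \<phi>_def G_def using A_borel Q_sets
    by (intro distr_recomb_elem_eqI) (auto simp: select_eq_density intro!: sets_PiM_cong)
qed

lemma exp_Shat_recomb_elem:
  assumes gs: "\<And>i. i < K \<Longrightarrow> gs i \<in> Gspace"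
  shows "ennreal (exp (- Shat n S Q K A \<kappa> (recomb_elem K A gs) / real n)) =
    (\<Prod>i<K. \<integral>\<^sup>+y. select_density n S Q y \<partial>\<kappa> i (restr (gs i) (A i)))"
proof -
  define Z where "Z = (\<integral>x. exp (- S x / real n) \<partial>Q)"
  define c where "c i = (\<integral>x. exp (- S x / real n) \<partial>\<kappa> i (restr (gs i) (A i)))" for i
  have \<kappa>: "prob_space (\<kappa> i (restr (gs i) (A i)))" "sets (\<kappa> i (restr (gs i) (A i))) = sets Galg"
    if "i < K" for i
    using \<kappa>_rcd[OF that] restr_in_Gspace[OF gs A_borel, OF that that]
    by (simp_all add: space_Galg is_rcd_prob_space sets_is_rcd)
  have Z: "0 < Z" unfolding Z_def using Q_prob Q_sets by (rule integral_exp_S_pos)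
  have c: "0 < c i" if "i < K" for i unfolding c_def using \<kappa>[OF that] by (rule integral_exp_S_pos)
  have restr_gs: "restr (recomb_elem K A gs) (A i) = restr (gs i) (A i)" if "i < K" for i
    using gs A_borel A_disj that by (rule restr_recomb_elem)
  have "exp (- Shat n S Q K A \<kappa> (recomb_elem K A gs) / real n) =
      (\<Prod>i<K. (\<integral>x. exp (- S x / real n) \<partial>\<kappa> i (restr (recomb_elem K A gs) (A i))) / Z)"
    unfolding Z_def by (rule exp_Shat[OF n_pos]) (use c Z in \<open>simp_all add: c_def Z_def restr_gs\<close>)
  also have "\<dots> = (\<Prod>i<K. c i / Z)"
    by (intro prod.cong refl) (simp add: c_def restr_gs)
  also have "ennreal \<dots> = (\<Prod>i<K. ennreal (c i / Z))"
    using c Z by (intro prod_ennreal[symmetric]) (simp add: less_imp_le)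
  also have "\<dots> = (\<Prod>i<K. \<integral>\<^sup>+y. select_density n S Q y \<partial>\<kappa> i (restr (gs i) (A i)))"
  proof (rule prod.cong[OF refl])
    fix i assume "i \<in> {..<K}"
    then have "integrable (\<kappa> i (restr (gs i) (A i))) (\<lambda>x. exp (- S x / real n))"
      using \<kappa> by (intro integrable_exp_S) auto
    then show "ennreal (c i / Z) = (\<integral>\<^sup>+y. select_density n S Q y \<partial>\<kappa> i (restr (gs i) (A i)))"
      unfolding select_density_def using Z
      by (subst nn_integral_eq_integral) (auto simp: c_def Z_def)
  qed
  finally show ?thesis .
qed

lemma density_recombine_Shat:
  "density (recombine K A Q) (\<lambda>g. ennreal (exp (- Shat n S Q K A \<kappa> g / real n))) =
    distr (density (PiM {..<K} (\<lambda>_. Q))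
        (\<lambda>gs. \<Prod>i<K. \<integral>\<^sup>+y. select_density n S Q y \<partial>\<kappa> i (restr (gs i) (A i))))
      Galg (recomb_elem K A)"
proof -
  define P where "P = PiM {..<K} (\<lambda>_. Q)"
  define H where "H = (\<lambda>g. ennreal (exp (- Shat n S Q K A \<kappa> g / real n)))"
  have sets_P: "sets P = sets (PiM {..<K} (\<lambda>_. Galg :: 'a measure measure))"
    unfolding P_def using Q_sets by (intro sets_PiM_cong) auto
  have recomb: "recomb_elem K A \<in> P \<rightarrow>\<^sub>M Galg"
    using measurable_recomb_elem[OF A_borel] by (simp add: measurable_cong_sets[OF sets_P refl])
  have H: "H \<in> borel_measurable Galg"
    unfolding H_def using measurable_Shat by measurable
  have "density (recombine K A Q) H =
      distr (density P (\<lambda>gs. H (recomb_elem K A gs))) Galg (recomb_elem K A)"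
    unfolding recombine_def P_def[symmetric] using H recomb by (rule density_distr)
  also have "density P (\<lambda>gs. H (recomb_elem K A gs)) =
      density P (\<lambda>gs. \<Prod>i<K. \<integral>\<^sup>+y. select_density n S Q y \<partial>\<kappa> i (restr (gs i) (A i)))"
  proof (rule density_cong)
    show "(\<lambda>gs. H (recomb_elem K A gs)) \<in> borel_measurable P"
      using recomb H by (rule measurable_compose)
    show "(\<lambda>gs. \<Prod>i<K. \<integral>\<^sup>+y. select_density n S Q y \<partial>\<kappa> i (restr (gs i) (A i))) \<in> borel_measurable P"
      unfolding P_def using measurable_cond_select_density
      by (intro borel_measurable_prod_ennreal measurable_compose[OF measurable_component_singleton])
        (auto simp: measurable_cong_sets[OF Q_sets refl])
    show "AE gs in P. H (recomb_elem K A gs) =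
        (\<Prod>i<K. \<integral>\<^sup>+y. select_density n S Q y \<partial>\<kappa> i (restr (gs i) (A i)))"
    proof (rule AE_I2)
      fix gs assume "gs \<in> space P"
      then have "gs i \<in> Gspace" if "i < K" for i
        using that sets_eq_imp_space_eq[OF Q_sets] by (auto simp: P_def space_PiM space_Galg)
      then show "H (recomb_elem K A gs) =
          (\<Prod>i<K. \<integral>\<^sup>+y. select_density n S Q y \<partial>\<kappa> i (restr (gs i) (A i)))"
        unfolding H_def by (rule exp_Shat_recomb_elem)
    qed
  qed
  finally show ?thesis unfolding H_def P_def .
qed

end

theorem lemma7p2:
  fixes S :: "'a::polish_space measure \<Rightarrow> real"
    and Q :: "'a measure measure"
    and K n :: nat
    and A :: "nat \<Rightarrow> 'a set"
    and \<kappa> :: "nat \<Rightarrow> 'a measure \<Rightarrow> 'a measure measure"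
  assumes S_meas: "S \<in> borel_measurable Galg"
    and S_nonneg: "\<And>g. g \<in> space Galg \<Longrightarrow> S g \<ge> 0"
    and n_pos: "n > 0"
    and A_borel: "\<And>i. i < K \<Longrightarrow> A i \<in> sets borel"
    and A_nonempty: "\<And>i. i < K \<Longrightarrow> A i \<noteq> {}"
    and A_disj: "disjoint_family_on A {..<K}"
    and A_cover: "(\<Union>i<K. A i) = UNIV"
    and Q_prob: "prob_space Q"
    and Q_sets: "sets Q = sets Galg"
    and \<kappa>_rcd: "\<And>i. i < K \<Longrightarrow> is_rcd Q (A i) (\<kappa> i)"
  shows "absolutely_continuous (recombine K A Q) (recombine K A (select n S Q)) \<and>
         recombine K A (select n S Q) =
           density (recombine K A Q) (\<lambda>g. ennreal (exp (- Shat n S Q K A \<kappa> g / real n)))"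
proof -
  interpret selection_recombination S Q K n A \<kappa>
    using S_meas S_nonneg n_pos A_borel A_disj Q_prob Q_sets \<kappa>_rcd
    by (rule selection_recombination.intro)
  define H where "H = (\<lambda>g. ennreal (exp (- Shat n S Q K A \<kappa> g / real n)))"
  have "recombine K A (select n S Q) = density (recombine K A Q) H"
    unfolding H_def recombine_select density_recombine_Shat ..
  moreover have "absolutely_continuous (recombine K A Q) (density (recombine K A Q) H)"
    using measurable_Shat unfolding H_def
    by (intro absolutely_continuousI_density)
      (simp add: recombine_def measurable_cong_sets[OF sets_distr refl])
  ultimately show ?thesis by (simp add: H_def)
qed

end
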